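(* Let $G$ be a graph with a Hamilton path $L=x_0x_1\ldots x_p$. Then there is a bond of $G$ meeting every path of $G$ of length at least $\lceil (p+1)/2\rceil$.
   Context: All graphs are finite, simple and undirected. A Hamilton path is a path containing every vertex of the graph. The length of a path is its number of edges. A bond of $G$ is a minimal nonempty edge-cut, where an edge-cut is a set of edges of the form $\{xy\in E(G): x\in X, y\in V(G)\setminus X\}$ for some $X\subseteq V(G)$. A set of edges meets a path if the path contains at least one edge of the set. *)

theory Defs
  imports Complex_Main
begin

definition simple_graph :: "'a set \<Rightarrow> 'a set set \<Rightarrow> bool" where
  "simple_graph V E \<longleftrightarrow> finite V \<and>
     (\<forall>e\<in>E. \<exists>x y. x \<in> V \<and> y \<in> V \<and> x \<noteq> y \<and> e = {x, y})"

definition is_path :: "'a set \<Rightarrow> 'a set set \<Rightarrow> 'a list \<Rightarrow> bool" where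
  "is_path V E xs \<longleftrightarrow> xs \<noteq> [] \<and> distinct xs \<and> set xs \<subseteq> V \<and>
     (\<forall>i. Suc i < length xs \<longrightarrow> {xs ! i, xs ! Suc i} \<in> E)"

definition path_edges :: "'a list \<Rightarrow> 'a set set" where
  "path_edges xs = {{xs ! i, xs ! Suc i} | i. Suc i < length xs}"

definition path_length :: "'a list \<Rightarrow> nat" where
  "path_length xs = length xs - 1"

definition hamilton_path :: "'a set \<Rightarrow> 'a set set \<Rightarrow> 'a list \<Rightarrow> bool" where
  "hamilton_path V E xs \<longleftrightarrow> is_path V E xs \<and> set xs = V"

definition edge_cut :: "'a set \<Rightarrow> 'a set set \<Rightarrow> 'a set \<Rightarrow> 'a set set" where
  "edge_cut V E X = {e \<in> E. \<exists>x\<in>X. \<exists>y\<in>V - X. e = {x, y}}"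

definition is_edge_cut :: "'a set \<Rightarrow> 'a set set \<Rightarrow> 'a set set \<Rightarrow> bool" where
  "is_edge_cut V E F \<longleftrightarrow> (\<exists>X. X \<subseteq> V \<and> F = edge_cut V E X)"

definition is_bond :: "'a set \<Rightarrow> 'a set set \<Rightarrow> 'a set set \<Rightarrow> bool" where
  "is_bond V E F \<longleftrightarrow> is_edge_cut V E F \<and> F \<noteq> {} \<and>
     (\<forall>F'. is_edge_cut V E F' \<and> F' \<noteq> {} \<and> F' \<subseteq> F \<longrightarrow> F' = F)"

definition meets :: "'a set set \<Rightarrow> 'a list \<Rightarrow> bool" where
  "meets F xs \<longleftrightarrow> F \<inter> path_edges xs \<noteq> {}"

end

theory Submission
  imports Defs
begin

text \<open>Cut the Hamilton path into its first \<open>\<lfloor>(p+1)/2\<rfloor>\<close> vertices \<open>X\<close> and the remaining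
\<open>\<lceil>(p+1)/2\<rceil>\<close> vertices. Both halves are spanned by subpaths of \<open>L\<close>, so the edge-cut of \<open>X\<close>
is a bond: any nonempty edge-cut inside it misses both subpaths, hence cannot separate
either half, and is therefore the cut of \<open>X\<close> or of its complement. A path avoiding the
cut stays inside one half, so it has at most \<open>\<lceil>(p+1)/2\<rceil>\<close> vertices.\<close>

lemma eq_chain:
  assumes "\<And>j. Suc j < k \<Longrightarrow> Q j = Q (Suc j)" and "i < k"
  shows "Q i = Q 0"
  using assms(2)
proof (induction i)
  case (Suc i)
  then show ?case using assms(1) by simp
qed simp

lemma ceiling_half_nat: "\<lceil>real n / 2\<rceil> = int (n - n div 2)"
proof (rule ceiling_unique)
  show "real_of_int (int (n - n div 2)) - 1 < real n / 2"
    and "real n / 2 \<le> real_of_int (int (n - n div 2))"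
    by (cases "even n"; auto elim!: evenE oddE simp: field_simps)+
qed

lemma set_drop_eq_Diff_set_take:
  assumes "distinct xs"
  shows "set (drop k xs) = set xs - set (take k xs)"
proof -
  have "set xs = set (take k xs) \<union> set (drop k xs)"
    by (metis append_take_drop_id set_append)
  then show ?thesis
    using set_take_disj_set_drop_if_distinct[OF assms, of k k] by blast
qed

lemma edge_cut_memI:
  assumes "{u, v} \<in> E" "u \<in> V" "v \<in> V" "(u \<in> X) \<noteq> (v \<in> X)"
  shows "{u, v} \<in> edge_cut V E X"
  using assms unfolding edge_cut_def by (cases "u \<in> X") (auto simp: insert_commute)

lemma edge_cut_Diff:
  assumes "X \<subseteq> V"
  shows "edge_cut V E (V - X) = edge_cut V E X"
  using assms unfolding edge_cut_def by (auto simp: insert_commute)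

lemma edge_cut_empty: "edge_cut V E {} = {}"
  and edge_cut_all: "edge_cut V E V = {}"
  unfolding edge_cut_def by auto

lemma is_path_take:
  assumes "is_path V E P" "0 < k"
  shows "is_path V E (take k P)"
  using assms set_take_subset[of k P] unfolding is_path_def by auto

lemma is_path_drop:
  assumes "is_path V E P" "k < length P"
  shows "is_path V E (drop k P)"
  using assms set_drop_subset[of k P] unfolding is_path_def
  by (auto simp: add.commute[of k] simp del: add_Suc_right)

lemma length_le_card_if_is_path:
  assumes "is_path V E P" "set P \<subseteq> S" "finite S"
  shows "length P \<le> card S"
  using assms card_mono[of S "set P"] distinct_card[of P] unfolding is_path_def by simp

lemma not_meets_edge_cut_iff:
  assumes "is_path V E P"
  shows "\<not> meets (edge_cut V E X) P \<longleftrightarrow> set P \<subseteq> X \<or> set P \<inter> X = {}"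
proof
  assume avoid: "\<not> meets (edge_cut V E X) P"
  have "(P ! j \<in> X) = (P ! Suc j \<in> X)" if "Suc j < length P" for j
  proof (rule ccontr)
    assume "(P ! j \<in> X) \<noteq> (P ! Suc j \<in> X)"
    moreover have "P ! j \<in> V" "P ! Suc j \<in> V"
      using assms that nth_mem[of j P] nth_mem[of "Suc j" P] unfolding is_path_def by auto
    ultimately have "{P ! j, P ! Suc j} \<in> edge_cut V E X"
      using assms that unfolding is_path_def by (intro edge_cut_memI) auto
    moreover have "{P ! j, P ! Suc j} \<in> path_edges P"
      unfolding path_edges_def using that by blast
    ultimately show False using avoid unfolding meets_def by blast
  qed
  then have "(P ! i \<in> X) = (P ! 0 \<in> X)" if "i < length P" for i
    using eq_chain[of "length P" "\<lambda>j. P ! j \<in> X"] that by blast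
  then show "set P \<subseteq> X \<or> set P \<inter> X = {}"
    by (cases "P ! 0 \<in> X") (auto simp: in_set_conv_nth)
next
  assume side: "set P \<subseteq> X \<or> set P \<inter> X = {}"
  have "e \<notin> edge_cut V E X" if e: "e \<in> path_edges P" for e
  proof -
    obtain i where i: "Suc i < length P" "e = {P ! i, P ! Suc i}"
      using e unfolding path_edges_def by blast
    then have "P ! i \<in> set P" "P ! Suc i \<in> set P" by auto
    then show ?thesis
      using side i(2) unfolding edge_cut_def by (auto simp: doubleton_eq_iff)
  qed
  then show "\<not> meets (edge_cut V E X) P" unfolding meets_def by blast
qed

text \<open>The paths \<open>P\<close> and \<open>Q\<close> certify that both sides of the cut induce connected subgraphs.\<close>

lemma is_bond_edge_cut:
  assumes "is_path V E P" "is_path V E Q" "set P = X" "set Q = V - X" "X \<subseteq> V"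
    and "edge_cut V E X \<noteq> {}"
  shows "is_bond V E (edge_cut V E X)"
  unfolding is_bond_def
proof (intro conjI allI impI)
  show "is_edge_cut V E (edge_cut V E X)"
    unfolding is_edge_cut_def using assms(5) by blast
next
  fix F' assume F': "is_edge_cut V E F' \<and> F' \<noteq> {} \<and> F' \<subseteq> edge_cut V E X"
  then obtain X' where X': "X' \<subseteq> V" "F' = edge_cut V E X'"
    unfolding is_edge_cut_def by blast
  have "\<not> meets F' P" "\<not> meets F' Q"
    using F' not_meets_edge_cut_iff[OF assms(1), of X] not_meets_edge_cut_iff[OF assms(2), of X]
      assms(3,4) unfolding meets_def by auto
  then have X: "X \<subseteq> X' \<or> X \<inter> X' = {}" and V_X: "V - X \<subseteq> X' \<or> (V - X) \<inter> X' = {}"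
    using not_meets_edge_cut_iff[OF assms(1)] not_meets_edge_cut_iff[OF assms(2)]
      assms(3,4) X'(2) by auto
  consider "X' = V" | "X' = {}" | "X' = X" | "X' = V - X"
    using X V_X X'(1) assms(5) by blast
  then show "F' = edge_cut V E X"
    using F' X'(2) by cases (auto simp: edge_cut_empty edge_cut_all edge_cut_Diff[OF assms(5)])
qed (use assms(6) in simp)

lemma is_bond_edge_cut_take:
  assumes "hamilton_path V E L" "0 < k" "k < length L"
  shows "is_bond V E (edge_cut V E (set (take k L)))"
proof (rule is_bond_edge_cut)
  have L: "is_path V E L" "set L = V" "distinct L"
    using assms(1) unfolding hamilton_path_def is_path_def by auto
  show "is_path V E (take k L)" "is_path V E (drop k L)"
    using is_path_take[OF L(1) assms(2)] is_path_drop[OF L(1) assms(3)] .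
  show "set (take k L) \<subseteq> V"
    using L(2) set_take_subset by metis
  show V_X: "set (drop k L) = V - set (take k L)"
    using set_drop_eq_Diff_set_take[OF L(3)] L(2) by simp
  have "set (take k L) \<noteq> {}" "set (drop k L) \<noteq> {}"
    using assms(2,3) by auto
  then have "\<not> (set L \<subseteq> set (take k L) \<or> set L \<inter> set (take k L) = {})"
    using L(2) V_X set_take_subset[of k L] by (metis Diff_eq_empty_iff Int_absorb1)
  then show "edge_cut V E (set (take k L)) \<noteq> {}"
    using not_meets_edge_cut_iff[OF L(1)] unfolding meets_def by auto
qed (rule refl)

lemma length_le_if_not_meets_edge_cut_take:
  assumes "hamilton_path V E L" "is_path V E P" "\<not> meets (edge_cut V E (set (take k L))) P"
  shows "length P \<le> max k (length L - k)"
proof -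
  have L: "set L = V" "distinct L"
    using assms(1) unfolding hamilton_path_def is_path_def by auto
  have "set P \<subseteq> set (take k L) \<or> set P \<subseteq> set (drop k L)"
    using not_meets_edge_cut_iff[OF assms(2)] assms(2,3) set_drop_eq_Diff_set_take[OF L(2)] L(1)
    unfolding is_path_def by auto
  then have "length P \<le> card (set (take k L)) \<or> length P \<le> card (set (drop k L))"
    using length_le_card_if_is_path[OF assms(2)] finite_set by blast
  then show ?thesis
    using L(2) by (auto simp: distinct_card)
qed

theorem lemma5:
  fixes V :: "'a set" and E :: "'a set set" and L :: "'a list"
  assumes "simple_graph V E"
    and "hamilton_path V E L"
    and "path_length L \<ge> 1"
  shows "\<exists>F. is_bond V E F \<and>
           (\<forall>P. is_path V E P \<and>
                 real (path_length P) \<ge> of_int \<lceil>(real (path_length L) + 1) / 2\<rceil>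
                 \<longrightarrow> meets F P)"
proof -
  define k where "k = length L div 2"
  have k: "0 < k" "k < length L" "k \<le> length L - k"
    using assms(3) unfolding k_def path_length_def by auto
  have "meets (edge_cut V E (set (take k L))) P"
    if P: "is_path V E P" "real (path_length P) \<ge> of_int \<lceil>(real (path_length L) + 1) / 2\<rceil>" for P
  proof (rule ccontr)
    have "real (path_length L) + 1 = real (length L)"
      using k(2) unfolding path_length_def by simp
    then have "length L - k \<le> path_length P"
      using P(2) unfolding k_def by (simp add: ceiling_half_nat)
    moreover have "0 < length P"
      using P(1) unfolding is_path_def by simp
    moreover assume "\<not> meets (edge_cut V E (set (take k L))) P"
    then have "length P \<le> max k (length L - k)"
      using length_le_if_not_meets_edge_cut_take[OF assms(2) P(1)] by blast
    ultimately show False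
      using k(3) unfolding path_length_def by linarith
  qed
  then show ?thesis
    using is_bond_edge_cut_take[OF assms(2) k(1,2)] by blast
qed

end
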